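(* Let $\mathcal{G}=(V,L)$ be a finite connected undirected graph with monitor set $M$ and non-monitor set $N=V\setminus M$, $\sigma=|N|$, and let $P$ be a given set of measurement paths between monitors (Uncontrollable Probing). Let $S\subseteq N$. Then: (a) if $k\le\sigma-1$ and $\mathrm{MSC}(v)\ge k+1$ for every $v\in S$, then $S$ is $k$-identifiable; (b) if $k\le\sigma$ and $S$ is $k$-identifiable, then $\mathrm{MSC}(v)\ge k$ for every $v\in S$.
   Context: Here $k\ge1$ is an integer. Failure model: a failure set is any $F\subseteq N$ (monitors never fail); a measurement path fails iff it traverses a node of $F$. For $F\subseteq N$, $P_F$ is the set of paths in $P$ traversing at least one node of $F$; $F_1,F_2$ are distinguishable iff $P_{F_1}\ne P_{F_2}$. $S\subseteq N$ is $k$-identifiable if any two failure sets $F_1,F_2$ with $|F_1|,|F_2|\le k$ and $F_1\cap S\ne F_2\cap S$ are distinguishable. For $v\in N$, $P_v$ is the set of paths in $P$ traversing $v$. $\mathrm{MSC}(v)$ is the minimum cardinality of a set $V'\subseteq N\setminus\{v\}$ with $P_v\subseteq\bigcup_{w\in V'}P_w$; if no such $V'$ exists (e.g. when $v$ lies on a two-hop measurement path monitor–$v$–monitor), $\mathrm{MSC}(v):=\sigma$. *)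

theory Defs
  imports Main
begin

definition undirected_graph :: "'a set \<Rightarrow> ('a \<times> 'a) set \<Rightarrow> bool" where
  "undirected_graph V E \<longleftrightarrow> finite V \<and> E \<subseteq> V \<times> V \<and> sym E \<and> irrefl E"

definition connected_graph :: "'a set \<Rightarrow> ('a \<times> 'a) set \<Rightarrow> bool" where
  "connected_graph V E \<longleftrightarrow> (\<forall>u\<in>V. \<forall>v\<in>V. (u, v) \<in> E\<^sup>*)"

definition is_path :: "('a \<times> 'a) set \<Rightarrow> 'a list \<Rightarrow> bool" where
  "is_path E p \<longleftrightarrow> p \<noteq> [] \<and> distinct p \<and> (\<forall>i. Suc i < length p \<longrightarrow> (p ! i, p ! Suc i) \<in> E)"

definition measurement_path :: "('a \<times> 'a) set \<Rightarrow> 'a set \<Rightarrow> 'a list \<Rightarrow> bool" where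
  "measurement_path E M p \<longleftrightarrow> is_path E p \<and> hd p \<in> M \<and> last p \<in> M"

definition paths_through :: "'a list set \<Rightarrow> 'a \<Rightarrow> 'a list set" where
  "paths_through P v = {p \<in> P. v \<in> set p}"

definition paths_through_set :: "'a list set \<Rightarrow> 'a set \<Rightarrow> 'a list set" where
  "paths_through_set P F = {p \<in> P. \<exists>v\<in>F. v \<in> set p}"

definition distinguishable :: "'a list set \<Rightarrow> 'a set \<Rightarrow> 'a set \<Rightarrow> bool" where
  "distinguishable P F1 F2 \<longleftrightarrow> paths_through_set P F1 \<noteq> paths_through_set P F2"

definition k_identifiable :: "'a list set \<Rightarrow> 'a set \<Rightarrow> nat \<Rightarrow> 'a set \<Rightarrow> bool" where
  "k_identifiable P N k S \<longleftrightarrow>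
     (\<forall>F1 F2. F1 \<subseteq> N \<and> F2 \<subseteq> N \<and> card F1 \<le> k \<and> card F2 \<le> k \<and> F1 \<inter> S \<noteq> F2 \<inter> S
        \<longrightarrow> distinguishable P F1 F2)"

definition MSC :: "'a list set \<Rightarrow> 'a set \<Rightarrow> 'a \<Rightarrow> nat" where
  "MSC P N v =
    (if \<exists>V'. V' \<subseteq> N - {v} \<and> paths_through P v \<subseteq> (\<Union>w\<in>V'. paths_through P w)
     then (LEAST n. \<exists>V'. V' \<subseteq> N - {v} \<and> paths_through P v \<subseteq> (\<Union>w\<in>V'. paths_through P w)
                         \<and> card V' = n)
     else card N)"

end

theory Submission
  imports Defs
begin

text \<open>A node v can be hidden behind a failure set F not containing it exactly when F covers P_v:
  then F and F \<union> {v} fail the same paths. Part (a) follows because any two indistinguishable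
  failure sets differing on S yield such a cover of size at most k; part (b) because a cover
  of size below k, together with v, gives two indistinguishable failure sets of size at most k.\<close>

definition msc_cover :: "'a list set \<Rightarrow> 'a set \<Rightarrow> 'a \<Rightarrow> 'a set \<Rightarrow> bool" where
  "msc_cover P N v V' \<longleftrightarrow>
     V' \<subseteq> N - {v} \<and> paths_through P v \<subseteq> (\<Union>w\<in>V'. paths_through P w)"

lemma MSC_eq_Least:
  "MSC P N v = (if \<exists>V'. msc_cover P N v V'
                then (LEAST n. \<exists>V'. msc_cover P N v V' \<and> card V' = n) else card N)"
  unfolding MSC_def msc_cover_def by (simp only: conj_assoc)

lemma MSC_le_card_cover:
  assumes "msc_cover P N v V'"
  shows "MSC P N v \<le> card V'"
proof -
  have "(LEAST n. \<exists>V'. msc_cover P N v V' \<and> card V' = n) \<le> card V'"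
    using assms by (intro Least_le) blast
  then show ?thesis using assms by (auto simp: MSC_eq_Least)
qed

lemma MSC_attained:
  assumes "msc_cover P N v V'"
  obtains C where "msc_cover P N v C" and "card C = MSC P N v"
proof -
  let ?least = "LEAST n. \<exists>C. msc_cover P N v C \<and> card C = n"
  have "\<exists>n C. msc_cover P N v C \<and> card C = n" using assms by blast
  then have "\<exists>C. msc_cover P N v C \<and> card C = ?least" by (rule LeastI_ex)
  moreover have "MSC P N v = ?least" using assms by (auto simp: MSC_eq_Least)
  ultimately show ?thesis using that by metis
qed

lemma MSC_no_cover:
  assumes "\<nexists>V'. msc_cover P N v V'"
  shows "MSC P N v = card N"
  using assms by (simp add: MSC_eq_Least)

lemma paths_through_set_insert_cover:
  assumes "msc_cover P N v V'"
  shows "paths_through_set P (insert v V') = paths_through_set P V'"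
  using assms unfolding msc_cover_def paths_through_def paths_through_set_def by blast

lemma msc_cover_if_same_paths:
  assumes "paths_through_set P F1 = paths_through_set P F2"
    and "v \<in> F1" "v \<notin> F2" "F2 \<subseteq> N"
  shows "msc_cover P N v F2"
  using assms unfolding msc_cover_def paths_through_def paths_through_set_def by blast

lemma k_identifiable_if_MSC_gt:
  assumes "\<forall>v\<in>S. k < MSC P N v"
  shows "k_identifiable P N k S"
  unfolding k_identifiable_def distinguishable_def
proof (intro allI impI notI)
  fix F1 F2
  assume F: "F1 \<subseteq> N \<and> F2 \<subseteq> N \<and> card F1 \<le> k \<and> card F2 \<le> k \<and> F1 \<inter> S \<noteq> F2 \<inter> S"
    and same: "paths_through_set P F1 = paths_through_set P F2"
  have hidden: "False" if "paths_through_set P G1 = paths_through_set P G2"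
    and "v \<in> G1" "v \<in> S" "v \<notin> G2" "G2 \<subseteq> N" "card G2 \<le> k" for G1 G2 v
  proof -
    have "MSC P N v \<le> card G2"
      using that by (intro MSC_le_card_cover msc_cover_if_same_paths)
    then show False using assms that by fastforce
  qed
  from F obtain v where "v \<in> S" "v \<in> F1 \<and> v \<notin> F2 \<or> v \<in> F2 \<and> v \<notin> F1" by blast
  then show False
  proof (elim disjE conjE)
    assume "v \<in> F1" "v \<notin> F2"
    then show False using hidden[OF same] \<open>v \<in> S\<close> F by blast
  next
    assume "v \<in> F2" "v \<notin> F1"
    then show False using hidden[OF same[symmetric]] \<open>v \<in> S\<close> F by blast
  qed
qed

lemma MSC_ge_if_k_identifiable:
  assumes "finite N" "S \<subseteq> N" "k \<le> card N" "k_identifiable P N k S" "v \<in> S"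
  shows "k \<le> MSC P N v"
proof (cases "\<exists>V'. msc_cover P N v V'")
  case False
  then show ?thesis using assms(3) by (simp add: MSC_no_cover)
next
  case True
  then obtain C where C: "msc_cover P N v C" and card_C: "card C = MSC P N v"
    using MSC_attained by metis
  show ?thesis
  proof (rule ccontr)
    assume "\<not> k \<le> MSC P N v"
    then have "card C < k" using card_C by simp
    have "C \<subseteq> N - {v}" using C by (simp add: msc_cover_def)
    then have "finite C" "v \<notin> C" using assms(1) finite_subset by auto
    then have "card (insert v C) \<le> k" using \<open>card C < k\<close> by simp
    moreover have "insert v C \<subseteq> N" "insert v C \<inter> S \<noteq> C \<inter> S"
      using \<open>C \<subseteq> N - {v}\<close> assms(2,5) by auto
    ultimately have "distinguishable P (insert v C) C"
      using assms(4) \<open>card C < k\<close> \<open>C \<subseteq> N - {v}\<close> unfolding k_identifiable_def by auto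
    then show False
      using paths_through_set_insert_cover[OF C] by (simp add: distinguishable_def)
  qed
qed

theorem theorem3:
  fixes V M :: "'a set" and E :: "('a \<times> 'a) set" and P :: "'a list set"
    and S :: "'a set" and k :: nat
  assumes graph: "undirected_graph V E"
    and conn: "connected_graph V E"
    and mon: "M \<subseteq> V"
    and paths: "\<forall>p\<in>P. measurement_path E M p"
    and S: "S \<subseteq> V - M"
    and k: "k \<ge> 1"
  shows "(k \<le> card (V - M) - 1 \<and> (\<forall>v\<in>S. MSC P (V - M) v \<ge> k + 1)
            \<longrightarrow> k_identifiable P (V - M) k S)
       \<and> (k \<le> card (V - M) \<and> k_identifiable P (V - M) k S
            \<longrightarrow> (\<forall>v\<in>S. MSC P (V - M) v \<ge> k))"
proof -
  have "finite (V - M)" using graph by (simp add: undirected_graph_def)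
  moreover have "k_identifiable P (V - M) k S" if "\<forall>v\<in>S. MSC P (V - M) v \<ge> k + 1"
    using that by (intro k_identifiable_if_MSC_gt) auto
  moreover have "\<forall>v\<in>S. k \<le> MSC P (V - M) v"
    if "k \<le> card (V - M)" "k_identifiable P (V - M) k S"
    using MSC_ge_if_k_identifiable[OF \<open>finite (V - M)\<close> S that] by blast
  ultimately show ?thesis by blast
qed

end
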